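(* Let $\sigma$ be a sequence of integers, let $P_1,\dots,P_{\mathsf{lis}(\sigma)}$ be the piles produced by Patience Sorting on $\sigma$ and $Q_1,\dots,Q_{\mathsf{lis}(\sigma)}$ the piles produced by Reversed Patience Sorting on $\sigma$. Then $P_{k} \cap Q_{\mathsf{lis}(\sigma) - k + 1} \ne \emptyset$ for all $k$ with $1 \le k \le \mathsf{lis}(\sigma)$.
   Context: $\sigma=\langle\sigma(1),\dots,\sigma(n)\rangle$, repetitions allowed; pile elements are identified by their positions in $\sigma$, so intersection of piles means sharing a position. Patience Sorting: initially $\ell=0$ and dummy pile $P_0=\{-\infty\}$; for $i=1,\dots,n$, if $\sigma(i)>\mathtt{top}(P_\ell)$ increment $\ell$ and push $\sigma(i)$ onto a new pile $P_\ell$, else push it onto $P_j$ for the smallest $j$ with $\sigma(i)\le\mathtt{top}(P_j)$ ($\mathtt{top}$ = most recently pushed element). Reversed Patience Sorting: initially $\ell=0$ and dummy pile $Q_0=\{+\infty\}$; for $i=n,n-1,\dots,1$, if $\sigma(i)<\mathtt{top}(Q_\ell)$ increment $\ell$ and push $\sigma(i)$ onto a new pile $Q_\ell$, else push it onto $Q_j$ for the smallest $j$ with $\sigma(i)>\mathtt{top}(Q_j)$. Both procedures end with exactly $\mathsf{lis}(\sigma)$ piles, where $\mathsf{lis}(\sigma)$ is the length of a longest strictly increasing subsequence. *)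

theory Defs
  imports "HOL-Library.Sublist"
begin

text \<open>Sequences are int lists; positions are 0-based indices into the list.
  A pile is a list of positions whose head is its top (most recently pushed element).
  A pile configuration is a list of piles; entry j (0-based) is pile P_(j+1).\<close>

definition lis :: "int list \<Rightarrow> nat" where
  "lis s = Max {length xs | xs. subseq xs s \<and> sorted_wrt (<) xs}"

definition top_val :: "int list \<Rightarrow> nat list \<Rightarrow> int" where
  "top_val s p = s ! hd p"

definition pstep :: "int list \<Rightarrow> nat list list \<Rightarrow> nat \<Rightarrow> nat list list" where
  "pstep s ps i =
     (if ps = [] \<or> s ! i > top_val s (last ps) then ps @ [[i]]
      else (let j = (LEAST j. j < length ps \<and> s ! i \<le> top_val s (ps ! j))
            in ps[j := i # ps ! j]))"

definition qstep :: "int list \<Rightarrow> nat list list \<Rightarrow> nat \<Rightarrow> nat list list" where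
  "qstep s qs i =
     (if qs = [] \<or> s ! i < top_val s (last qs) then qs @ [[i]]
      else (let j = (LEAST j. j < length qs \<and> s ! i \<ge> top_val s (qs ! j))
            in qs[j := i # qs ! j]))"

definition patience :: "int list \<Rightarrow> nat list list" where
  "patience s = foldl (pstep s) [] [0..<length s]"

definition rev_patience :: "int list \<Rightarrow> nat list list" where
  "rev_patience s = foldl (qstep s) [] (rev [0..<length s])"

end

theory Submission
  imports Defs
begin

text \<open>Both procedures are instances of one greedy step: Patience Sorting feeds it the positions in
  increasing order with the values of \<sigma>, Reversed Patience Sorting feeds it the positions in
  decreasing order with the negated values. The greedy step keeps a position x on pile a + 1 exactly
  when a longest chain ending in x has a + 1 elements. So x \<in> P(a+1) says that a longest increasing
  subsequence ending at x has length a + 1, and x \<in> Q(b+1) that a longest one starting at x has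
  length b + 1; gluing the two at x gives a + b + 1 \<le> lis \<sigma>. If x is the k-th element of a longest
  increasing subsequence, its first k elements give a \<ge> k - 1 and its last lis \<sigma> - k + 1 elements
  give b \<ge> lis \<sigma> - k, so both bounds are attained and x lies in P(k) and in Q(lis \<sigma> - k + 1).\<close>

section \<open>Increasing subsequences as chains of positions\<close>

lemma set_mono_subseq: "subseq xs ys \<Longrightarrow> set xs \<subseteq> set ys"
  by (induction rule: list_emb.induct) auto

lemma sorted_wrt_subseq: "subseq xs ys \<Longrightarrow> sorted_wrt P ys \<Longrightarrow> sorted_wrt P xs"
  by (induction rule: list_emb.induct) (auto dest: set_mono_subseq)

lemma subseq_map_rightE:
  assumes "subseq xs (map f ys)"
  shows "\<exists>xs'. subseq xs' ys \<and> xs = map f xs'"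
  using assms
proof (induction ys arbitrary: xs)
  case (Cons y ys)
  show ?case
  proof (cases "xs \<noteq> [] \<and> hd xs = f y")
    case True
    then obtain xs'' where "xs = f y # xs''" by (cases xs) auto
    then obtain zs where "subseq zs ys" "xs'' = map f zs"
      using Cons by auto
    then show ?thesis using \<open>xs = f y # xs''\<close> by (intro exI[of _ "y # zs"]) auto
  next
    case False
    then have "subseq xs (map f ys)" using Cons.prems by (cases xs) auto
    then show ?thesis using Cons.IH by blast
  qed
qed (auto dest: list_emb_Nil2)

lemma sorted_wrt_snoc_Cons_join:
  assumes "transp P" "sorted_wrt P (xs @ [x])" "sorted_wrt P (x # ys)"
  shows "sorted_wrt P (xs @ x # ys)"
  using assms by (auto simp: sorted_wrt_append dest: transpD)

text \<open>With \<open>R = (<)\<close> and \<open>v = (!) s\<close>, increasing chains are the index lists of the strictly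
  increasing subsequences of \<open>s\<close>; Reversed Patience Sorting uses \<open>R = (>)\<close> and \<open>v i = - s ! i\<close>.\<close>

definition increasing_chain ::
    "('a \<Rightarrow> 'a \<Rightarrow> bool) \<Rightarrow> ('a \<Rightarrow> 'b::linorder) \<Rightarrow> 'a list \<Rightarrow> bool" where
  "increasing_chain R v = sorted_wrt (\<lambda>x y. R x y \<and> v x < v y)"

lemma increasing_chain_iff:
  "increasing_chain R v c \<longleftrightarrow> sorted_wrt R c \<and> sorted_wrt (\<lambda>x y. v x < v y) c"
  unfolding increasing_chain_def by (induction c) auto

lemma increasing_chain_snoc:
  "increasing_chain R v (c @ [x]) \<longleftrightarrow>
     increasing_chain R v c \<and> (\<forall>y\<in>set c. R y x \<and> v y < v x)"
  unfolding increasing_chain_def by (simp add: sorted_wrt_append)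

lemma increasing_chain_rev:
  fixes v :: "'a \<Rightarrow> 'b::linordered_ab_group_add"
  shows "increasing_chain (\<lambda>x y. R y x) (\<lambda>x. - v x) (rev c) \<longleftrightarrow> increasing_chain R v c"
  unfolding increasing_chain_def by (simp add: sorted_wrt_rev)

lemma finite_lengths_subseq: "finite {length xs | xs. subseq xs s \<and> P xs}"
  by (rule finite_subset[of _ "{..length s}"]) (auto dest: list_emb_length)

lemma length_le_lis:
  assumes "increasing_chain (<) ((!) s) c" and "set c \<subseteq> {..<length s}"
  shows "length c \<le> lis s"
proof -
  have "subseq c [0..<length s]"
    using assms by (intro sorted_subset_imp_subseq) (auto simp: increasing_chain_iff)
  then have "subseq (map ((!) s) c) s"
    using subseq_map map_nth by metis
  moreover have "sorted_wrt (<) (map ((!) s) c)"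
    using assms(1) by (simp add: increasing_chain_iff sorted_wrt_map)
  ultimately show ?thesis
    unfolding lis_def by (intro Max_ge[OF finite_lengths_subseq]) force
qed

lemma lis_attained:
  "\<exists>c. increasing_chain (<) ((!) s) c \<and> set c \<subseteq> {..<length s} \<and> length c = lis s"
proof -
  have "lis s \<in> {length xs | xs. subseq xs s \<and> sorted_wrt (<) xs}"
    unfolding lis_def by (rule Max_in[OF finite_lengths_subseq]) (auto intro: exI[of _ "[]"])
  then obtain xs where xs: "subseq xs (map ((!) s) [0..<length s])" "sorted_wrt (<) xs"
    "length xs = lis s"
    by (auto simp: map_nth)
  then obtain c where c: "subseq c [0..<length s]" "xs = map ((!) s) c"
    using subseq_map_rightE by blast
  have "sorted_wrt (<) c" by (rule sorted_wrt_subseq[OF c(1)]) simp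
  moreover have "set c \<subseteq> {..<length s}" using set_mono_subseq[OF c(1)] by auto
  ultimately show ?thesis
    using xs c by (intro exI[of _ c]) (simp add: increasing_chain_iff sorted_wrt_map)
qed

section \<open>Depth of a position in a chain\<close>

definition chain_depth ::
    "('a \<Rightarrow> 'a \<Rightarrow> bool) \<Rightarrow> ('a \<Rightarrow> 'b::linorder) \<Rightarrow> 'a list \<Rightarrow> 'a \<Rightarrow> nat \<Rightarrow> bool" where
  "chain_depth R v D x a \<longleftrightarrow>
     (\<exists>c. length c = a \<and> set c \<subseteq> set D \<and> increasing_chain R v (c @ [x])) \<and>
     (\<forall>c. set c \<subseteq> set D \<and> increasing_chain R v (c @ [x]) \<longrightarrow> length c \<le> a)"

lemma length_le_chain_depth:
  "chain_depth R v D x a \<Longrightarrow> set c \<subseteq> set D \<Longrightarrow> increasing_chain R v (c @ [x]) \<Longrightarrow>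
    length c \<le> a"
  unfolding chain_depth_def by blast

lemma chain_depthE:
  assumes "chain_depth R v D x a"
  obtains c where "length c = a" "set c \<subseteq> set D" "increasing_chain R v (c @ [x])"
  using assms unfolding chain_depth_def by blast

lemma chain_depth_snoc_old:
  assumes "asymp R" and "\<forall>y\<in>set D. R y i" and "x \<in> set D"
  shows "chain_depth R v (D @ [i]) x a \<longleftrightarrow> chain_depth R v D x a"
proof -
  have "set c \<subseteq> set D" if "set c \<subseteq> set (D @ [i])" "increasing_chain R v (c @ [x])" for c
  proof -
    have "i \<notin> set c"
      using that(2) assms by (auto simp: increasing_chain_snoc dest: asympD)
    then show ?thesis using that(1) by auto
  qed
  then show ?thesis unfolding chain_depth_def by (metis set_append le_supI1)
qed

lemma chain_depth_snoc_new:
  assumes "asymp R" and before: "\<forall>y\<in>set D. R y i"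
    and below: "\<And>y. y \<in> set D \<Longrightarrow> v y < v i \<Longrightarrow> \<exists>b<a. chain_depth R v D y b"
    and reach: "0 < a \<Longrightarrow> \<exists>y\<in>set D. v y < v i \<and> chain_depth R v D y (a - 1)"
  shows "chain_depth R v (D @ [i]) i a"
  unfolding chain_depth_def
proof (intro conjI allI impI)
  show "\<exists>c. length c = a \<and> set c \<subseteq> set (D @ [i]) \<and> increasing_chain R v (c @ [i])"
  proof (cases "a = 0")
    case True
    then show ?thesis by (intro exI[of _ "[]"]) (simp add: increasing_chain_def)
  next
    case False
    then obtain y c where y: "y \<in> set D" "v y < v i"
      and c: "length c = a - 1" "set c \<subseteq> set D" "increasing_chain R v (c @ [y])"
      using reach unfolding chain_depth_def by blast
    have "\<forall>z\<in>set (c @ [y]). R z i \<and> v z < v i"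
      using c(2,3) y before by (auto simp: increasing_chain_snoc)
    then have "increasing_chain R v ((c @ [y]) @ [i])"
      using c(3) increasing_chain_snoc[of R v "c @ [y]" i] by blast
    then show ?thesis using c y False by (intro exI[of _ "c @ [y]"]) auto
  qed
next
  fix c assume c: "set c \<subseteq> set (D @ [i]) \<and> increasing_chain R v (c @ [i])"
  show "length c \<le> a"
  proof (cases c rule: rev_cases)
    case (snoc c' y)
    have chain: "increasing_chain R v c" "\<forall>z\<in>set c. R z i \<and> v z < v i"
      using c by (simp_all add: increasing_chain_snoc)
    have "\<not> R i i" using \<open>asymp R\<close> by (auto dest: asympD)
    then have "set c \<subseteq> set D" using c chain(2) by auto
    moreover have "v y < v i" "increasing_chain R v (c' @ [y])"
      using chain snoc by auto
    ultimately obtain b where "b < a" "chain_depth R v D y b"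
      using below snoc by auto
    moreover have "set c' \<subseteq> set D" using \<open>set c \<subseteq> set D\<close> snoc by auto
    ultimately have "length c' < a"
      using \<open>increasing_chain R v (c' @ [y])\<close> by (meson length_le_chain_depth le_less_trans)
    then show ?thesis using snoc by simp
  qed simp
qed

section \<open>The piles of Patience Sorting\<close>

definition patience_step :: "('a \<Rightarrow> 'b::linorder) \<Rightarrow> 'a list list \<Rightarrow> 'a \<Rightarrow> 'a list list" where
  "patience_step v ps i =
     (if ps = [] \<or> v i > v (hd (last ps)) then ps @ [[i]]
      else (let j = (LEAST j. j < length ps \<and> v i \<le> v (hd (ps ! j)))
            in ps[j := i # ps ! j]))"

lemma pstep_eq_patience_step: "pstep s = patience_step ((!) s)"
  by (intro ext) (simp add: pstep_def patience_step_def top_val_def)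

lemma qstep_eq_patience_step: "qstep s = patience_step (\<lambda>i. - s ! i)"
  by (intro ext) (simp add: qstep_def patience_step_def top_val_def)

definition pile_invariant ::
    "('a \<Rightarrow> 'a \<Rightarrow> bool) \<Rightarrow> ('a \<Rightarrow> 'b::linorder) \<Rightarrow> 'a list \<Rightarrow> 'a list list \<Rightarrow> bool" where
  "pile_invariant R v D ps \<longleftrightarrow>
     set (concat ps) = set D \<and>
     sorted_wrt (\<lambda>p q. v (hd p) < v (hd q)) ps \<and>
     (\<forall>a<length ps. ps ! a \<noteq> [] \<and>
        (\<forall>x\<in>set (ps ! a). v (hd (ps ! a)) \<le> v x \<and> chain_depth R v D x a))"

lemma in_set_concat_conv_nth: "x \<in> set (concat xss) \<longleftrightarrow> (\<exists>a<length xss. x \<in> set (xss ! a))"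
  by (metis in_set_conv_nth set_concat UN_iff)

lemma pile_invariant_pile_of:
  assumes "pile_invariant R v D ps" and "x \<in> set D"
  obtains a where "a < length ps" "x \<in> set (ps ! a)" "chain_depth R v D x a"
  using assms unfolding pile_invariant_def by (metis in_set_concat_conv_nth)

lemma pile_invariant_depth_snoc_old:
  assumes "pile_invariant R v D ps" "asymp R" "\<forall>y\<in>set D. R y i"
    and "a < length ps" "x \<in> set (ps ! a)"
  shows "chain_depth R v (D @ [i]) x a"
proof -
  have "x \<in> set D"
    using assms(1,4,5) unfolding pile_invariant_def by (metis in_set_concat_conv_nth)
  then show ?thesis
    using assms unfolding pile_invariant_def by (simp add: chain_depth_snoc_old)
qed

lemma pile_invariant_depth_placed:
  assumes inv: "pile_invariant R v D ps" and "asymp R" "\<forall>y\<in>set D. R y i"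
    and j: "j \<le> length ps" and left: "\<forall>b<j. v (hd (ps ! b)) < v i"
    and right: "j < length ps \<Longrightarrow> v i \<le> v (hd (ps ! j))"
  shows "chain_depth R v (D @ [i]) i j"
proof (rule chain_depth_snoc_new[OF assms(2,3)])
  note I = inv[unfolded pile_invariant_def]
  fix y assume y: "y \<in> set D" "v y < v i"
  then obtain b where b: "b < length ps" "y \<in> set (ps ! b)" "chain_depth R v D y b"
    using pile_invariant_pile_of[OF inv] by blast
  have "b < j"
  proof (rule ccontr)
    assume "\<not> b < j"
    then have "v (hd (ps ! j)) \<le> v (hd (ps ! b))"
      using I b(1) by (cases "j = b") (auto simp: sorted_wrt_iff_nth_less intro: less_imp_le)
    moreover have "v (hd (ps ! b)) \<le> v y" using I b(1,2) by blast
    ultimately show False using right y(2) b(1) \<open>\<not> b < j\<close> by fastforce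
  qed
  then show "\<exists>b<j. chain_depth R v D y b" using b(3) by blast
next
  note I = inv[unfolded pile_invariant_def]
  assume "0 < j"
  then have j1: "j - 1 < length ps" using j by linarith
  then have top: "hd (ps ! (j - 1)) \<in> set (ps ! (j - 1))" using I by auto
  then have "hd (ps ! (j - 1)) \<in> set D" using I j1 by (metis in_set_concat_conv_nth)
  moreover have "v (hd (ps ! (j - 1))) < v i" using left \<open>0 < j\<close> by simp
  ultimately show "\<exists>y\<in>set D. v y < v i \<and> chain_depth R v D y (j - 1)"
    using I j1 top by blast
qed

lemma pile_invariant_new_pile:
  assumes inv: "pile_invariant R v D ps" and "asymp R" "\<forall>y\<in>set D. R y i"
    and above: "\<forall>p\<in>set ps. v (hd p) < v i"
  shows "pile_invariant R v (D @ [i]) (ps @ [[i]])"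
proof -
  note I = inv[unfolded pile_invariant_def]
  have "chain_depth R v (D @ [i]) i (length ps)"
    using pile_invariant_depth_placed[OF assms(1-3)] above by auto
  moreover have "chain_depth R v (D @ [i]) x a" if "a < length ps" "x \<in> set (ps ! a)" for a x
    using pile_invariant_depth_snoc_old[OF assms(1-3) that] .
  ultimately show ?thesis
    using I above by (auto simp: pile_invariant_def sorted_wrt_append nth_append less_Suc_eq)
qed

lemma set_concat_push:
  assumes "j < length ps"
  shows "set (concat (ps[j := x # ps ! j])) = insert x (set (concat ps))"
proof -
  define l r where "l = take j ps" and "r = drop (Suc j) ps"
  have "set (concat ps) = set (concat (l @ ps ! j # r))"
    using id_take_nth_drop[OF assms] unfolding l_def r_def by argo
  moreover have "ps[j := x # ps ! j] = l @ (x # ps ! j) # r"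
    using upd_conv_take_nth_drop[OF assms] unfolding l_def r_def .
  ultimately show ?thesis by auto
qed

lemma pile_invariant_push:
  assumes inv: "pile_invariant R v D ps" and "asymp R" "\<forall>y\<in>set D. R y i"
    and j: "j < length ps" and left: "\<forall>b<j. v (hd (ps ! b)) < v i"
    and right: "v i \<le> v (hd (ps ! j))"
  shows "pile_invariant R v (D @ [i]) (ps[j := i # ps ! j])"
proof -
  note I = inv[unfolded pile_invariant_def]
  let ?ps = "ps[j := i # ps ! j]"
  have nth: "?ps ! a = (if a = j then i # ps ! j else ps ! a)" for a
    using j by (simp add: nth_list_update)
  have tops: "v (hd (ps ! a)) < v (hd (ps ! b))" if "a < b" "b < length ps" for a b
    using I that by (simp add: sorted_wrt_iff_nth_less)
  have depth_i: "chain_depth R v (D @ [i]) i j"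
    using pile_invariant_depth_placed[OF assms(1-3)] j left right by auto
  have depth_old: "chain_depth R v (D @ [i]) x a" if "a < length ps" "x \<in> set (ps ! a)" for a x
    using pile_invariant_depth_snoc_old[OF assms(1-3) that] .
  have "set (concat ?ps) = set (D @ [i])" using I set_concat_push[OF j] by simp
  moreover have "sorted_wrt (\<lambda>p q. v (hd p) < v (hd q)) ?ps"
    unfolding sorted_wrt_iff_nth_less
  proof (intro allI impI)
    fix a b assume "a < b" "b < length ?ps"
    then show "v (hd (?ps ! a)) < v (hd (?ps ! b))"
      using left right tops[of a b] tops[of j b] by (auto simp: nth)
  qed
  moreover have "?ps ! a \<noteq> [] \<and>
      (\<forall>x\<in>set (?ps ! a). v (hd (?ps ! a)) \<le> v x \<and> chain_depth R v (D @ [i]) x a)"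
    if "a < length ?ps" for a
  proof (cases "a = j")
    case True
    then show ?thesis using I j right depth_i depth_old[of j] by (fastforce simp: nth)
  next
    case False
    then show ?thesis using I that depth_old[of a] by (simp add: nth)
  qed
  ultimately show ?thesis unfolding pile_invariant_def by blast
qed

lemma pile_invariant_step:
  assumes inv: "pile_invariant R v D ps" and "asymp R" "\<forall>y\<in>set D. R y i"
  shows "pile_invariant R v (D @ [i]) (patience_step v ps i)"
proof (cases "ps = [] \<or> v i > v (hd (last ps))")
  case True
  have "\<forall>p\<in>set ps. v (hd p) < v i"
  proof
    fix p assume "p \<in> set ps"
    then obtain a where a: "a < length ps" "p = ps ! a" by (auto simp: in_set_conv_nth)
    have "v (hd (ps ! a)) \<le> v (hd (ps ! (length ps - 1)))"
    proof (cases "a = length ps - 1")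
      case False
      then show ?thesis
        using inv a(1) unfolding pile_invariant_def sorted_wrt_iff_nth_less by (simp add: less_imp_le)
    qed simp
    moreover have "last ps = ps ! (length ps - 1)" using a(1) by (intro last_conv_nth) auto
    ultimately show "v (hd p) < v i" using True a by auto
  qed
  then show ?thesis
    using True pile_invariant_new_pile[OF assms] unfolding patience_step_def by simp
next
  case False
  define j where "j = (LEAST j. j < length ps \<and> v i \<le> v (hd (ps ! j)))"
  have "length ps - 1 < length ps \<and> v i \<le> v (hd (ps ! (length ps - 1)))"
    using False last_conv_nth[of ps] by auto
  then have j: "j < length ps \<and> v i \<le> v (hd (ps ! j))"
    unfolding j_def by (rule LeastI)
  have "\<forall>b<j. v (hd (ps ! b)) < v i"
  proof (intro allI impI)
    fix b assume "b < j"
    then have "\<not> (b < length ps \<and> v i \<le> v (hd (ps ! b)))"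
      unfolding j_def by (rule not_less_Least)
    then show "v (hd (ps ! b)) < v i" using \<open>b < j\<close> j by auto
  qed
  then show ?thesis
    using False j pile_invariant_push[OF assms] unfolding patience_step_def j_def Let_def by simp
qed

lemma pile_invariant_foldl:
  assumes "asymp R" and "sorted_wrt R D"
  shows "pile_invariant R v D (foldl (patience_step v) [] D)"
  using assms(2)
proof (induction D rule: rev_induct)
  case Nil
  then show ?case by (simp add: pile_invariant_def)
next
  case (snoc i D)
  then have "sorted_wrt R D" "\<forall>y\<in>set D. R y i" by (simp_all add: sorted_wrt_append)
  then show ?case using snoc.IH pile_invariant_step[OF _ assms(1)] by simp
qed

lemma pile_invariant_patience: "pile_invariant (<) ((!) s) [0..<length s] (patience s)"
  unfolding patience_def pstep_eq_patience_step
  by (rule pile_invariant_foldl) auto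

lemma pile_invariant_rev_patience:
  "pile_invariant (>) (\<lambda>i. - s ! i) (rev [0..<length s]) (rev_patience s)"
  unfolding rev_patience_def qstep_eq_patience_step
  by (rule pile_invariant_foldl) (auto simp: sorted_wrt_rev)

section \<open>Piles meeting along a longest increasing subsequence\<close>

lemma depth_sum_le_lis:
  assumes "x < length s"
    and "chain_depth (<) ((!) s) [0..<length s] x a"
    and "chain_depth (>) (\<lambda>i. - s ! i) (rev [0..<length s]) x b"
  shows "a + b + 1 \<le> lis s"
proof -
  obtain c where c: "length c = a" "set c \<subseteq> set [0..<length s]" "increasing_chain (<) ((!) s) (c @ [x])"
    using assms(2) by (rule chain_depthE)
  obtain d where d: "length d = b" "set d \<subseteq> set (rev [0..<length s])"
    "increasing_chain (>) (\<lambda>i. - s ! i) (d @ [x])"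
    using assms(3) by (rule chain_depthE)
  have "increasing_chain (<) ((!) s) (x # rev d)"
    using d(3) increasing_chain_rev[of "(<)" "(!) s" "x # rev d"] by simp
  moreover have "transp (\<lambda>y z. y < z \<and> s ! y < s ! z)"
    by (rule transpI) auto
  ultimately have "increasing_chain (<) ((!) s) (c @ x # rev d)"
    using c(3) unfolding increasing_chain_def by (blast intro: sorted_wrt_snoc_Cons_join)
  moreover have "set (c @ x # rev d) \<subseteq> {..<length s}" using assms(1) c(2) d(2) by auto
  ultimately show ?thesis
    using length_le_lis[of s "c @ x # rev d"] c(1) d(1) by simp
qed

lemma chain_depths_along_longest_chain:
  assumes c: "increasing_chain (<) ((!) s) c" "set c \<subseteq> {..<length s}" "length c = lis s"
    and "m < lis s"
    and a: "chain_depth (<) ((!) s) [0..<length s] (c ! m) a"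
    and b: "chain_depth (>) (\<lambda>i. - s ! i) (rev [0..<length s]) (c ! m) b"
  shows "a = m \<and> b = lis s - Suc m"
proof -
  define x where "x = c ! m"
  have "m < length c" using assms c(3) by simp
  then have "x \<in> set c" unfolding x_def by simp
  then have "x < length s" using c(2) by auto
  have take: "take (Suc m) c = take m c @ [x]"
    unfolding x_def using \<open>m < length c\<close> by (rule take_Suc_conv_app_nth)
  have drop: "drop m c = x # drop (Suc m) c"
    unfolding x_def using \<open>m < length c\<close> by (rule Cons_nth_drop_Suc[symmetric])
  have "increasing_chain (<) ((!) s) (take m c @ [x])"
    using c(1) unfolding take[symmetric] increasing_chain_def by (rule sorted_wrt_take)
  moreover have "set (take m c) \<subseteq> set [0..<length s]" using c(2) by (auto dest: in_set_takeD)
  ultimately have "m \<le> a"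
    using length_le_chain_depth[OF a[folded x_def]] \<open>m < length c\<close> by fastforce
  have "increasing_chain (<) ((!) s) (x # drop (Suc m) c)"
    using c(1) unfolding drop[symmetric] increasing_chain_def by (rule sorted_wrt_drop)
  then have "increasing_chain (>) (\<lambda>i. - s ! i) (rev (drop (Suc m) c) @ [x])"
    using increasing_chain_rev[of "(<)" "(!) s" "x # drop (Suc m) c"] by simp
  moreover have "set (rev (drop (Suc m) c)) \<subseteq> set (rev [0..<length s])"
    using c(2) by (auto dest: in_set_dropD)
  ultimately have "length (rev (drop (Suc m) c)) \<le> b"
    using length_le_chain_depth[OF b[folded x_def]] by blast
  then have "lis s - Suc m \<le> b" using c(3) by simp
  with \<open>m \<le> a\<close> depth_sum_le_lis[OF \<open>x < length s\<close> a[folded x_def] b[folded x_def]] \<open>m < lis s\<close>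
  show ?thesis by linarith
qed

theorem lemma15:
  fixes s :: "int list" and k :: nat
  assumes "1 \<le> k" and "k \<le> lis s"
  shows "set (patience s ! (k - 1)) \<inter> set (rev_patience s ! (lis s - k)) \<noteq> {}"
proof -
  obtain c where c: "increasing_chain (<) ((!) s) c" "set c \<subseteq> {..<length s}" "length c = lis s"
    using lis_attained by blast
  obtain m where k: "k = Suc m" using assms(1) by (cases k) auto
  then have "m < lis s" using assms(2) by simp
  then have "c ! m \<in> set c" using c(3) by simp
  then have "c ! m \<in> set [0..<length s]" "c ! m \<in> set (rev [0..<length s])"
    using c(2) by auto
  then obtain a b where
      a: "c ! m \<in> set (patience s ! a)" "chain_depth (<) ((!) s) [0..<length s] (c ! m) a"
    and b: "c ! m \<in> set (rev_patience s ! b)"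
      "chain_depth (>) (\<lambda>i. - s ! i) (rev [0..<length s]) (c ! m) b"
    by (metis pile_invariant_pile_of pile_invariant_patience pile_invariant_rev_patience)
  have "a = k - 1" "b = lis s - k"
    using chain_depths_along_longest_chain[OF c \<open>m < lis s\<close> a(2) b(2)] k by simp_all
  then show ?thesis using a(1) b(1) by blast
qed

end
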